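(* Let $n \ge 1$ and let $x, y$ be valid Fibonacci representations of the same length. (i) If $D(x,y) \le -n-1$, then $D(x',y') \le -n-1$ for all valid right extensions $x'$ of $x$ and $y'$ of $y$ with $|x'| = |y'|$. (ii) If $D(x,y) \ge 2n$, then $D(x',y') \ge n$ for all valid right extensions $x'$ of $x$ and $y'$ of $y$ with $|x'|=|y'|$. Consequently, for $0 \le c < n$, if $D(x,y) \notin [-n, 2n-1]$ then no pair of such right extensions satisfies $[y'] = n[x'] + c$.
   Context: For a binary word $x = x_1\cdots x_\ell$, $[x] = \sum_{j=1}^{\ell} x_j F_{\ell-j+2}$ where $F_0=0,F_1=1,F_k=F_{k-1}+F_{k-2}$. A valid Fibonacci representation is a binary word with no factor $11$ (leading zeros allowed). A word $z$ is a valid right extension of $x$ if $x$ is a prefix of $z$ and $z$ contains no $11$. For words $u,v$, $D(u,v) = [v] - n[u]$. *)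

theory Defs
  imports Main "HOL-Number_Theory.Fib"
begin

text \<open>Binary words are lists of booleans (True = 1). The value of
x = x_1 ... x_l is the sum over j = 1..l of x_j * F(l - j + 2).\<close>

definition fibval :: "bool list \<Rightarrow> int" where
  "fibval x = (\<Sum>j = 1..length x. (if x ! (j - 1) then int (fib (length x - j + 2)) else 0))"

text \<open>Valid Fibonacci representation: no factor 11 (leading zeros allowed).\<close>
definition valid_fib :: "bool list \<Rightarrow> bool" where
  "valid_fib x \<longleftrightarrow> (\<forall>i. Suc i < length x \<longrightarrow> \<not> (x ! i \<and> x ! Suc i))"

definition valid_rext :: "bool list \<Rightarrow> bool list \<Rightarrow> bool" where
  "valid_rext z x \<longleftrightarrow> (\<exists>w. z = x @ w) \<and> valid_fib z"

definition Dval :: "nat \<Rightarrow> bool list \<Rightarrow> bool list \<Rightarrow> int" where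
  "Dval n u v = fibval v - int n * fibval u"

end

theory Submission
  imports Defs
begin

text \<open>Appending words w, v of common length k to x, y gives
D(xw, yv) = F(k+1) D(x, y) + F(k) E + D(w, v), where E = [y]' - n [x]' is the difference
taken with every Fibonacci index lowered by one, and 0 \<le> [w], [v] < F(k+2) by the Zeckendorf
bound. The key point is that E has the sign of D: for a valid word the residual
[x] - \<phi> [x]' stays in (-1, \<phi> - 1), because appending a letter a maps it to
(1 - \<phi>) (residual + a) with 1 - \<phi> = -1/\<phi>. Then \<phi> E = D - residual(y) + n residual(x)
is negative when D \<le> -n-1 and positive when D \<ge> n+1, and linear estimates finish.\<close>

primrec fibval_from :: "nat \<Rightarrow> bool list \<Rightarrow> int" where
  "fibval_from d [] = 0"
| "fibval_from d (a # x) = (if a then int (fib (length x + d)) else 0) + fibval_from d x"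

lemma fibval_from_eq_sum:
  "fibval_from d x = (\<Sum>i<length x. if x ! i then int (fib (length x - Suc i + d)) else 0)"
proof (induction x)
  case (Cons a x)
  then show ?case
    unfolding length_Cons sum.lessThan_Suc_shift by (simp, intro sum.cong) auto
qed simp

lemma fibval_eq_fibval_from: "fibval x = fibval_from 2 x"
  unfolding fibval_def fibval_from_eq_sum One_nat_def sum.atLeast1_atMost_eq
  by (intro sum.cong) auto

lemma fibval_from_append: "fibval_from d (x @ w) = fibval_from (d + length w) x + fibval_from d w"
  by (induction x) (auto simp: ac_simps)

lemma fibval_from_add:
  "fibval_from (k + 2) x = int (fib (Suc k)) * fibval_from 2 x + int (fib k) * fibval_from 1 x"
proof (induction x)
  case (Cons a x)
  have "fib (length x + (k + 2)) = fib (Suc k) * fib (length x + 2) + fib k * fib (length x + 1)"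
    using fib_add[of "length x + 1" k] by (simp add: ac_simps)
  then show ?case
    using Cons by (simp add: algebra_simps flip: of_nat_mult)
qed simp

lemma fibval_from_nonneg: "fibval_from d x \<ge> 0"
  by (induction x) auto

lemma fibval_append:
  "fibval (x @ w) =
    int (fib (Suc (length w))) * fibval x + int (fib (length w)) * fibval_from 1 x + fibval w"
  using fibval_from_add[of "length w" x]
  by (simp add: fibval_eq_fibval_from fibval_from_append add.commute)

lemma valid_fib_Cons_Cons [simp]: "valid_fib (a # b # x) \<longleftrightarrow> \<not> (a \<and> b) \<and> valid_fib (b # x)"
  unfolding valid_fib_def by (auto simp: less_Suc_eq_0_disj nth_Cons split: nat.splits)

lemma valid_fib_appendD:
  assumes "valid_fib (x @ w)"
  shows "valid_fib x" and "valid_fib w"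
proof -
  show "valid_fib x"
    unfolding valid_fib_def
  proof (intro allI impI)
    fix i assume "Suc i < length x"
    then show "\<not> (x ! i \<and> x ! Suc i)"
      using assms unfolding valid_fib_def
      by (metis Suc_lessD length_append nth_append_left trans_less_add1)
  qed
  show "valid_fib w"
    unfolding valid_fib_def
  proof (intro allI impI)
    fix i assume "Suc i < length w"
    then have "\<not> ((x @ w) ! (length x + i) \<and> (x @ w) ! Suc (length x + i))"
      using assms unfolding valid_fib_def by simp
    then show "\<not> (w ! i \<and> w ! Suc i)"
      by (simp add: nth_append)
  qed
qed

lemma fibval_less_fib: "valid_fib x \<Longrightarrow> fibval x < int (fib (length x + 2))"
  unfolding fibval_eq_fibval_from
proof (induction x rule: induct_list012)
  case (3 a b x)
  have IH: "fibval_from 2 x < int (fib (length x + 2))"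
    "fibval_from 2 (b # x) < int (fib (length x + 3))"
    using 3 valid_fib_appendD(2)[of "[a, b]" x] by (simp_all add: numeral_eq_Suc)
  show ?case
  proof (cases a)
    case True
    then have "\<not> b" using "3.prems" by simp
    then show ?thesis using True IH(1) by (simp add: numeral_eq_Suc)
  next
    case False
    then show ?thesis using IH(2) fib_Suc_mono[of "length x + 3"] by (simp add: numeral_eq_Suc)
  qed
qed (simp_all add: numeral_eq_Suc)

definition \<phi> :: real where "\<phi> = (1 + sqrt 5) / 2"

lemma golden_ratio_squared: "\<phi> * \<phi> = \<phi> + 1"
  unfolding \<phi>_def by (simp add: field_simps)

lemma golden_ratio_bounds: "1 < \<phi>" "\<phi> < 2"
proof -
  have "1 < sqrt 5" "sqrt 5 < 3"
    by (simp_all add: real_less_rsqrt real_less_lsqrt)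
  then show "1 < \<phi>" "\<phi> < 2" unfolding \<phi>_def by simp_all
qed

definition fib_residual :: "bool list \<Rightarrow> real" where
  "fib_residual x = fibval x - \<phi> * fibval_from 1 x"

lemma fib_residual_snoc: "fib_residual (x @ [a]) = (1 - \<phi>) * (fib_residual x + of_bool a)"
proof -
  have "fibval (x @ [a]) = fibval x + fibval_from 1 x + of_bool a"
    using fibval_append[of x "[a]"] by (simp add: fibval_eq_fibval_from)
  moreover have "fibval_from 1 (x @ [a]) = fibval x + of_bool a"
    by (simp add: fibval_from_append fibval_eq_fibval_from numeral_2_eq_2)
  ultimately show ?thesis
    unfolding fib_residual_def
    by (simp add: algebra_simps golden_ratio_squared flip: mult.assoc)
qed

text \<open>The third conjunct (a word that may be followed by a 1 ends in 0) is what keeps the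
residual above -1 after a 1 is appended.\<close>

lemma fib_residual_bounds:
  assumes "valid_fib x"
  shows "-1 < fib_residual x \<and> fib_residual x < \<phi> - 1
    \<and> (valid_fib (x @ [True]) \<longrightarrow> \<phi> - 2 < fib_residual x)"
  using assms
proof (induction x rule: rev_induct)
  case Nil
  then show ?case using golden_ratio_bounds by (simp add: fib_residual_def fibval_def)
next
  case (snoc a x)
  let ?r = "fib_residual x"
  have IH: "-1 < ?r" "?r < \<phi> - 1" "valid_fib (x @ [True]) \<Longrightarrow> \<phi> - 2 < ?r"
    using snoc valid_fib_appendD(1) by blast+
  have neg: "1 - \<phi> < 0" using golden_ratio_bounds by simp
  have "(1 - \<phi>) * (\<phi> - 1) = \<phi> - 2" "(1 - \<phi>) * \<phi> = -1"
    using golden_ratio_squared by (simp_all add: algebra_simps)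
  show ?case
  proof (cases a)
    case False
    have "(1 - \<phi>) * (\<phi> - 1) < (1 - \<phi>) * ?r" "(1 - \<phi>) * ?r < (1 - \<phi>) * -1"
      using IH(1,2) neg by (simp_all only: mult_strict_left_mono_neg)
    then show ?thesis
      using False golden_ratio_bounds \<open>(1 - \<phi>) * (\<phi> - 1) = \<phi> - 2\<close>
      by (simp add: fib_residual_snoc)
  next
    case True
    have "\<phi> - 2 < ?r" using IH(3) snoc.prems True by simp
    then have "(1 - \<phi>) * \<phi> < (1 - \<phi>) * (?r + 1)"
      "(1 - \<phi>) * (?r + 1) < (1 - \<phi>) * (\<phi> - 1)"
      using IH(2) neg by (simp_all add: mult_strict_left_mono_neg)
    moreover have "\<not> valid_fib (x @ [True] @ [True])"
      using valid_fib_appendD(2)[of x "[True, True]"] by auto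
    ultimately show ?thesis
      using True golden_ratio_bounds \<open>(1 - \<phi>) * (\<phi> - 1) = \<phi> - 2\<close> \<open>(1 - \<phi>) * \<phi> = -1\<close>
      by (simp add: fib_residual_snoc)
  qed
qed

definition shifted_Dval :: "nat \<Rightarrow> bool list \<Rightarrow> bool list \<Rightarrow> int" where
  "shifted_Dval n x y = fibval_from 1 y - int n * fibval_from 1 x"

lemma shifted_Dval_eq_fib_residual:
  "\<phi> * shifted_Dval n x y = Dval n x y - fib_residual y + n * fib_residual x"
  unfolding shifted_Dval_def Dval_def fib_residual_def by (simp add: algebra_simps)

lemma shifted_Dval_le_neg1:
  assumes "valid_fib x" "valid_fib y" "Dval n x y \<le> - int n - 1"
  shows "shifted_Dval n x y \<le> -1"
proof -
  have "n * fib_residual x \<le> n * (\<phi> - 1)"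
    using fib_residual_bounds[OF assms(1)] by (simp add: mult_left_mono)
  moreover have "- fib_residual y < 1"
    using fib_residual_bounds[OF assms(2)] by simp
  moreover have "n * (\<phi> - 1) \<le> n"
    using golden_ratio_bounds by (simp add: mult_left_le)
  ultimately have "\<phi> * shifted_Dval n x y < 0"
    using assms(3) unfolding shifted_Dval_eq_fib_residual by linarith
  then have "shifted_Dval n x y < 0"
    using golden_ratio_bounds by (simp add: mult_less_0_iff)
  then show ?thesis by simp
qed

lemma shifted_Dval_ge1:
  assumes "valid_fib x" "valid_fib y" "Dval n x y \<ge> int n + 1"
  shows "shifted_Dval n x y \<ge> 1"
proof -
  have "n * fib_residual x \<ge> - n"
    using fib_residual_bounds[OF assms(1)] mult_left_mono[of "-1" "fib_residual x" "real n"] by simp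
  moreover have "- fib_residual y > 1 - \<phi>"
    using fib_residual_bounds[OF assms(2)] by simp
  ultimately have "\<phi> * shifted_Dval n x y > 0"
    using assms(3) golden_ratio_bounds unfolding shifted_Dval_eq_fib_residual by linarith
  then have "shifted_Dval n x y > 0"
    using golden_ratio_bounds by (simp add: zero_less_mult_iff)
  then show ?thesis by simp
qed

lemma Dval_append:
  assumes "length w = length v"
  shows "Dval n (x @ w) (y @ v) = int (fib (Suc (length w))) * Dval n x y
    + int (fib (length w)) * shifted_Dval n x y + Dval n w v"
  unfolding Dval_def shifted_Dval_def fibval_append assms by (simp add: algebra_simps)

lemma Dval_append_upper:
  assumes "valid_fib (x @ w)" "valid_fib (y @ v)" "length w = length v"
    and "Dval n x y \<le> - int n - 1"
  shows "Dval n (x @ w) (y @ v) \<le> - int n - 1"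
proof -
  define A B where "A = int (fib (Suc (length w)))" and "B = int (fib (length w))"
  have "A \<ge> 1" unfolding A_def using fib_neq_0_nat[of "Suc (length w)"] by linarith
  have "fibval v < A + B"
    using fibval_less_fib[OF valid_fib_appendD(2)[OF assms(2)]] assms(3)
    unfolding A_def B_def by (simp add: numeral_eq_Suc)
  have "A * Dval n x y \<le> A * (- int n - 1)"
    using assms(4) \<open>A \<ge> 1\<close> by (intro mult_left_mono) auto
  moreover have "B * shifted_Dval n x y \<le> B * -1"
    using shifted_Dval_le_neg1[OF assms(1,2)[THEN valid_fib_appendD(1)] assms(4)]
    unfolding B_def by (intro mult_left_mono) auto
  moreover have "int n * fibval w \<ge> 0" by (simp add: fibval_eq_fibval_from fibval_from_nonneg)
  moreover have "A * int n \<ge> int n" using \<open>A \<ge> 1\<close> by (simp add: mult_le_cancel_right1)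
  ultimately show ?thesis
    using \<open>fibval v < A + B\<close> unfolding Dval_append[OF assms(3)] A_def[symmetric] B_def[symmetric]
    by (simp add: Dval_def algebra_simps)
qed

lemma Dval_append_lower:
  assumes "n \<ge> 1" and "valid_fib (x @ w)" "valid_fib (y @ v)" "length w = length v"
    and "Dval n x y \<ge> 2 * int n"
  shows "Dval n (x @ w) (y @ v) \<ge> int n"
proof -
  define A B where "A = int (fib (Suc (length w)))" and "B = int (fib (length w))"
  have "A \<ge> B" unfolding A_def B_def using fib_Suc_mono[of "length w"] by simp
  have "fibval w < A + B"
    using fibval_less_fib[OF valid_fib_appendD(2)[OF assms(2)]]
    unfolding A_def B_def by (simp add: numeral_eq_Suc)
  have "A * Dval n x y \<ge> A * (2 * int n)"
    using assms(5) unfolding A_def by (intro mult_left_mono) auto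
  moreover have "B * shifted_Dval n x y \<ge> 0"
    using shifted_Dval_ge1[OF assms(2,3)[THEN valid_fib_appendD(1)], of n] assms(1,5)
    unfolding B_def by simp
  moreover have "int n * fibval w \<le> int n * (A + B - 1)"
    using \<open>fibval w < A + B\<close> by (intro mult_left_mono) auto
  moreover have "A * int n \<ge> B * int n" using \<open>A \<ge> B\<close> by (intro mult_right_mono) auto
  moreover have "fibval v \<ge> 0" by (simp add: fibval_eq_fibval_from fibval_from_nonneg)
  ultimately show ?thesis
    unfolding Dval_append[OF assms(4)] A_def[symmetric] B_def[symmetric]
    by (simp add: Dval_def algebra_simps)
qed

theorem theorem11:
  fixes n :: nat and x y :: "bool list"
  assumes "n \<ge> 1" and "valid_fib x" and "valid_fib y" and "length x = length y"
  shows "(Dval n x y \<le> - int n - 1 \<longrightarrow>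
           (\<forall>x' y'. valid_rext x' x \<and> valid_rext y' y \<and> length x' = length y'
              \<longrightarrow> Dval n x' y' \<le> - int n - 1))
       \<and> (Dval n x y \<ge> 2 * int n \<longrightarrow>
           (\<forall>x' y'. valid_rext x' x \<and> valid_rext y' y \<and> length x' = length y'
              \<longrightarrow> Dval n x' y' \<ge> int n))
       \<and> (\<forall>c::nat. c < n \<longrightarrow> Dval n x y \<notin> {- int n .. 2 * int n - 1} \<longrightarrow>
           \<not> (\<exists>x' y'. valid_rext x' x \<and> valid_rext y' y \<and> length x' = length y'
              \<and> fibval y' = int n * fibval x' + int c))"
proof -
  have extensions: "\<exists>w v. x' = x @ w \<and> y' = y @ v \<and> valid_fib (x @ w) \<and> valid_fib (y @ v)
      \<and> length w = length v"
    if "valid_rext x' x \<and> valid_rext y' y \<and> length x' = length y'" for x' y'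
    using that assms(4) unfolding valid_rext_def by auto
  have upper: "Dval n x' y' \<le> - int n - 1"
    if "Dval n x y \<le> - int n - 1"
      "valid_rext x' x \<and> valid_rext y' y \<and> length x' = length y'" for x' y'
    using extensions[OF that(2)] Dval_append_upper that(1) by blast
  have lower: "Dval n x' y' \<ge> int n"
    if "Dval n x y \<ge> 2 * int n"
      "valid_rext x' x \<and> valid_rext y' y \<and> length x' = length y'" for x' y'
    using extensions[OF that(2)] Dval_append_lower[OF assms(1)] that(1) by blast
  have "Dval n x' y' \<noteq> int c"
    if "c < n" "Dval n x y \<notin> {- int n .. 2 * int n - 1}"
      "valid_rext x' x \<and> valid_rext y' y \<and> length x' = length y'" for c x' y'
    using upper[OF _ that(3)] lower[OF _ that(3)] that(1,2) by fastforce
  then show ?thesis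
    using upper lower unfolding Dval_def by fastforce
qed

end
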